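(* Let $m_1,m_2$ be positive integers, $r$ a real number with $0<|r|<1$, $d$ a positive integer, and ${\mathfrak p}(t)=(1+rt)^d$. Define $g:{\mathbb R}^2\to{\mathbb R}$ by $$g(t,k)=\begin{cases}2\,\dfrac{(\frac1{m_1}+\frac1{m_2})e^{-kt}-(\frac{e^k}{m_1}+\frac{e^{-k}}{m_2})}{e^k-e^{-k}}, & k\neq0,\\[2mm] \dfrac{1-t}{m_2}-\dfrac{1+t}{m_1}, & k=0.\end{cases}$$ Then there exists a unique $k_{m_1,m_2}\in{\mathbb R}$ such that $\int_{-1}^1 g(t,k_{m_1,m_2})\,{\mathfrak p}(t)\,dt=0$. *)

theory Defs
  imports "HOL-Analysis.Analysis"
begin

definition gfun :: "nat \<Rightarrow> nat \<Rightarrow> real \<Rightarrow> real \<Rightarrow> real" where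
  "gfun m1 m2 t k =
     (if k \<noteq> 0 then
        2 * ((1 / real m1 + 1 / real m2) * exp (- k * t)
             - (exp k / real m1 + exp (- k) / real m2)) / (exp k - exp (- k))
      else (1 - t) / real m2 - (1 + t) / real m1)"

definition pfun :: "real \<Rightarrow> nat \<Rightarrow> real \<Rightarrow> real" where
  "pfun r d t = (1 + r * t) ^ d"

end

theory Submission
  imports Defs
begin

text \<open>With \<open>a = 1/m\<^sub>1\<close> and \<open>b = 1/m\<^sub>2\<close> one has \<open>g(t,k) = 2b - 2(a+b) F\<^sub>k(t)\<close>, where
  \<open>F\<^sub>k\<close> is the distribution function on \<open>[-1,1]\<close> of the density proportional to \<open>e\<^sup>-\<^sup>k\<^sup>t\<close>.
  So the integral vanishes iff \<open>\<Phi>(k) = \<integral> F\<^sub>k p = b/(a+b) \<integral> p\<close>. A larger tilt \<open>k\<close>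
  moves mass to the left, so \<open>F\<^sub>k(t)\<close> increases strictly with \<open>k\<close> for \<open>-1 < t < 1\<close>, tending
  to \<open>0\<close> and \<open>1\<close> as \<open>k \<rightarrow> \<mp>\<infinity>\<close>. Since \<open>p > 0\<close> on \<open>(-1,1)\<close>, dominated convergence makes
  \<open>\<Phi>\<close> a continuous strictly increasing bijection onto \<open>(0, \<integral> p)\<close>, which contains the target.\<close>

lemma add_one_less_exp:
  fixes x :: real
  assumes "x \<noteq> 0"
  shows "1 + x < exp x"
proof (cases "x \<le> -2")
  case True
  then show ?thesis by (smt (verit) exp_gt_zero)
next
  case False
  have "1 + x < (1 + x/2)^2"
    using assms by (auto simp: power2_eq_square algebra_simps zero_less_mult_iff linorder_neq_iff)
  also have "\<dots> \<le> exp (x/2) ^ 2"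
    using False by (intro power_mono) auto
  also have "\<dots> = exp x"
    by (simp add: power2_eq_square flip: exp_add)
  finally show ?thesis .
qed

lemma exp_minus_exp_uminus_nonzero:
  fixes k :: real
  assumes "k \<noteq> 0"
  shows "exp k - exp (- k) \<noteq> 0"
  using assms by simp

definition tilted_cdf :: "real \<Rightarrow> real \<Rightarrow> real" where
  "tilted_cdf k t =
     (if k = 0 then (t + 1) / 2 else (exp k - exp (- k * t)) / (exp k - exp (- k)))"

lemma gfun_eq_tilted_cdf:
  "gfun m1 m2 t k = 2 / real m2 - 2 * (1 / real m1 + 1 / real m2) * tilted_cdf k t"
proof (cases "k = 0")
  case True
  then show ?thesis
    by (simp add: gfun_def tilted_cdf_def divide_simps) (simp add: algebra_simps)
next
  case False
  then show ?thesis
    using exp_minus_exp_uminus_nonzero[OF False]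
    by (simp add: gfun_def tilted_cdf_def divide_simps) (simp add: algebra_simps)
qed

lemma continuous_on_tilted_cdf: "continuous_on A (tilted_cdf k)"
  unfolding tilted_cdf_def[abs_def]
  by (cases "k = 0") (auto intro!: continuous_intros)

lemma tilted_cdf_in_unit_interval:
  assumes "t \<in> {-1..1}"
  shows "tilted_cdf k t \<in> {0..1}"
proof (cases "k = 0")
  case True
  then show ?thesis using assms by (simp add: tilted_cdf_def)
next
  case False
  have "\<bar>k * t\<bar> \<le> \<bar>k\<bar>"
    using assms by (auto simp: abs_mult mult_left_le)
  then have "exp (- \<bar>k\<bar>) \<le> exp (- k * t)" "exp (- k * t) \<le> exp \<bar>k\<bar>"
    by auto
  then show ?thesis
    using False by (cases "k > 0") (auto simp: tilted_cdf_def divide_simps abs_if)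
qed

lemma tilted_cdf_uminus: "tilted_cdf (- k) t = 1 - tilted_cdf k (- t)"
  using exp_minus_exp_uminus_nonzero[of k]
  by (cases "k = 0") (auto simp: tilted_cdf_def field_simps)

lemma isCont_tilted_cdf_tilt: "isCont (\<lambda>k. tilted_cdf k t) k0"
proof (cases "k0 = 0")
  case False
  have "\<forall>\<^sub>F k in nhds k0. k \<noteq> 0"
    using False by (rule t1_space_nhds)
  then have "\<forall>\<^sub>F k in nhds k0. tilted_cdf k t = (exp k - exp (- k * t)) / (exp k - exp (- k))"
    by eventually_elim (simp add: tilted_cdf_def)
  moreover have "isCont (\<lambda>k. (exp k - exp (- k * t)) / (exp k - exp (- k))) k0"
    using exp_minus_exp_uminus_nonzero[OF False] by (intro continuous_intros) auto
  ultimately show ?thesis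
    by (simp add: isCont_cong)
next
  case True
  text \<open>At \<open>k = 0\<close> the quotient is a ratio of two difference quotients at \<open>0\<close>.\<close>
  have "((\<lambda>k. exp k - exp (- k * t)) has_real_derivative 1 + t) (at 0)"
    by (auto intro!: derivative_eq_intros)
  then have num: "((\<lambda>k. (exp k - exp (- k * t) - (exp 0 - exp (- 0 * t))) / (k - 0))
      \<longlongrightarrow> 1 + t) (at 0)"
    unfolding has_field_derivative_iff .
  have "((\<lambda>k. exp k - exp (- k)) has_real_derivative 2) (at 0)"
    by (auto intro!: derivative_eq_intros)
  then have den: "((\<lambda>k. (exp k - exp (- k) - (exp 0 - exp (- 0))) / (k - 0))
      \<longlongrightarrow> 2) (at (0::real))"
    unfolding has_field_derivative_iff .
  have "((\<lambda>k. ((exp k - exp (- k * t) - (exp 0 - exp (- 0 * t))) / (k - 0))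
      / ((exp k - exp (- k) - (exp 0 - exp (- 0))) / (k - 0))) \<longlongrightarrow> (1 + t) / 2) (at 0)"
    using num den by (rule tendsto_divide) simp
  moreover have "\<forall>\<^sub>F k in at 0. ((exp k - exp (- k * t) - (exp 0 - exp (- 0 * t))) / (k - 0))
      / ((exp k - exp (- k) - (exp 0 - exp (- 0))) / (k - 0)) = tilted_cdf k t"
    by (auto simp: eventually_at_filter tilted_cdf_def)
  ultimately have "((\<lambda>k. tilted_cdf k t) \<longlongrightarrow> tilted_cdf 0 t) (at 0)"
    by (simp add: tendsto_cong tilted_cdf_def add.commute)
  then show ?thesis
    using True by (simp add: isCont_def)
qed

lemma tilted_cdf_tilt_deriv_pos:
  assumes k: "k \<noteq> 0" and t: "-1 < t" "t < 1"
  shows "\<exists>y. ((\<lambda>k. tilted_cdf k t) has_real_derivative y) (at k) \<and> y > 0"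
proof -
  define f where "f k = exp k - exp (- k * t)" for k
  define g where "g k = exp k - exp (- k)" for k :: real
  have "g k \<noteq> 0"
    using exp_minus_exp_uminus_nonzero[OF k] by (simp add: g_def)
  have "((\<lambda>k. f k / g k) has_real_derivative
      ((exp k + t * exp (- k * t)) * g k - (exp k + exp (- k)) * f k) / (g k * g k)) (at k)"
    unfolding f_def g_def using \<open>g k \<noteq> 0\<close>[unfolded g_def]
    by (auto intro!: derivative_eq_intros simp: power2_eq_square)
  then have deriv: "((\<lambda>k. tilted_cdf k t) has_real_derivative
      ((exp k + t * exp (- k * t)) * g k - (exp k + exp (- k)) * f k) / (g k * g k)) (at k)"
    by (rule has_field_derivative_transform_within_open[of _ _ _ "- {0}"])
       (use k in \<open>auto simp: tilted_cdf_def f_def g_def\<close>)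
  have "(exp k + t * exp (- k * t)) * g k - (exp k + exp (- k)) * f k
      = (1 + t) * exp (k * (1 - t)) + (1 - t) * exp (- k * (1 + t)) - 2"
    by (simp add: f_def g_def algebra_simps flip: exp_add)
  also have "\<dots> > 0"
    \<comment> \<open>compare both exponentials with the tangent line of \<open>exp\<close> at \<open>0\<close>\<close>
  proof -
    have "(1 + t) * (1 + k * (1 - t)) < (1 + t) * exp (k * (1 - t))"
      using add_one_less_exp[of "k * (1 - t)"] k t by simp
    moreover have "(1 - t) * (1 + - k * (1 + t)) \<le> (1 - t) * exp (- k * (1 + t))"
      using exp_ge_add_one_self[of "- k * (1 + t)"] t by simp
    ultimately show ?thesis
      by (simp add: algebra_simps)
  qed
  finally have "0 < ((exp k + t * exp (- k * t)) * g k - (exp k + exp (- k)) * f k) / (g k * g k)"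
    using \<open>g k \<noteq> 0\<close> by (intro divide_pos_pos) (auto simp: zero_less_mult_iff linorder_neq_iff)
  with deriv show ?thesis
    by blast
qed

lemma strict_mono_tilted_cdf_tilt:
  assumes "-1 < t" "t < 1"
  shows "strict_mono (\<lambda>k. tilted_cdf k t)"
proof -
  have less: "tilted_cdf k1 t < tilted_cdf k2 t" if "k1 < k2" "0 \<notin> {k1<..<k2}" for k1 k2
  proof (rule DERIV_pos_imp_increasing_open[OF \<open>k1 < k2\<close>])
    show "\<exists>y. ((\<lambda>k. tilted_cdf k t) has_real_derivative y) (at x) \<and> 0 < y"
      if "k1 < x" "x < k2" for x
      using that \<open>0 \<notin> {k1<..<k2}\<close> assms by (intro tilted_cdf_tilt_deriv_pos) auto
    show "continuous_on {k1..k2} (\<lambda>k. tilted_cdf k t)"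
      by (intro continuous_at_imp_continuous_on ballI isCont_tilted_cdf_tilt)
  qed
  show ?thesis
  proof (rule strict_monoI)
    fix k1 k2 :: real
    assume "k1 < k2"
    show "tilted_cdf k1 t < tilted_cdf k2 t"
    proof (cases "0 \<in> {k1<..<k2}")
      case True
      then show ?thesis
        using less[of k1 0] less[of 0 k2] by auto
    qed (use less \<open>k1 < k2\<close> in auto)
  qed
qed

lemma tilted_cdf_tendsto_at_top:
  assumes "-1 < t"
  shows "((\<lambda>k. tilted_cdf k t) \<longlongrightarrow> 1) at_top"
proof -
  have decay: "((\<lambda>k. exp (- k * a)) \<longlongrightarrow> 0) at_top" if "0 < a" for a :: real
  proof -
    have "filterlim (\<lambda>k. k * a) at_top at_top"
      using that by (intro filterlim_at_top_mult_tendsto_pos[OF tendsto_const] filterlim_ident)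
    then have "filterlim (\<lambda>k. - k * a) at_bot at_top"
      by (simp add: filterlim_uminus_at_top)
    then show ?thesis
      by (rule filterlim_compose[OF exp_at_bot])
  qed
  have "((\<lambda>k. (1 - exp (- k * (1 + t))) / (1 - exp (- k * 2))) \<longlongrightarrow> (1 - 0) / (1 - 0)) at_top"
    using assms by (intro tendsto_intros decay) auto
  moreover have "\<forall>\<^sub>F k in at_top. (1 - exp (- k * (1 + t))) / (1 - exp (- k * 2)) = tilted_cdf k t"
  proof (rule eventually_mono[OF eventually_gt_at_top[of 0]])
    fix k :: real
    assume "0 < k"
    have "tilted_cdf k t = (exp (- k) * (exp k - exp (- k * t))) / (exp (- k) * (exp k - exp (- k)))"
      using \<open>0 < k\<close> by (simp add: tilted_cdf_def)
    also have "\<dots> = (1 - exp (- k * (1 + t))) / (1 - exp (- k * 2))"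
      by (simp add: algebra_simps flip: exp_add)
    finally show "(1 - exp (- k * (1 + t))) / (1 - exp (- k * 2)) = tilted_cdf k t" ..
  qed
  ultimately show ?thesis
    by (simp add: tendsto_cong)
qed

lemma tilted_cdf_tendsto_at_bot:
  assumes "t < 1"
  shows "((\<lambda>k. tilted_cdf k t) \<longlongrightarrow> 0) at_bot"
proof -
  have "((\<lambda>k. 1 - tilted_cdf k (- t)) \<longlongrightarrow> 1 - 1) at_top"
    using assms by (intro tendsto_intros tilted_cdf_tendsto_at_top) auto
  then show ?thesis
    by (simp add: filterlim_at_bot_mirror tilted_cdf_uminus)
qed

definition tilted_cdf_integral :: "(real \<Rightarrow> real) \<Rightarrow> real \<Rightarrow> real" where
  "tilted_cdf_integral w k = integral {-1..1} (\<lambda>t. tilted_cdf k t * w t)"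

lemma tilted_cdf_integral_tendsto:
  assumes w: "continuous_on {-1..1} w"
    and lim: "\<And>t. t \<in> {-1<..<1} \<Longrightarrow> (\<lambda>n. tilted_cdf (u n) t) \<longlonglongrightarrow> h t"
  shows "(\<lambda>n. tilted_cdf_integral w (u n)) \<longlonglongrightarrow> integral {-1..1} (\<lambda>t. h t * w t)"
proof -
  have "(\<lambda>n. integral {-1<..<1} (\<lambda>t. tilted_cdf (u n) t * w t))
      \<longlonglongrightarrow> integral {-1<..<1} (\<lambda>t. h t * w t)"
  proof (rule dominated_convergence(2))
    show "(\<lambda>t. tilted_cdf (u n) t * w t) integrable_on {-1<..<1}" for n
      unfolding integrable_on_open_interval_real
      using w by (intro integrable_continuous_interval continuous_intros continuous_on_tilted_cdf)
    show "(\<lambda>t. norm (w t)) integrable_on {-1<..<1}"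
      unfolding integrable_on_open_interval_real
      using w by (intro integrable_continuous_interval continuous_intros)
    show "norm (tilted_cdf (u n) t * w t) \<le> norm (w t)" if "t \<in> {-1<..<1}" for n t
      using tilted_cdf_in_unit_interval[of t "u n"] that
      by (auto simp: abs_mult intro!: mult_left_le_one_le)
    show "(\<lambda>n. tilted_cdf (u n) t * w t) \<longlonglongrightarrow> h t * w t" if "t \<in> {-1<..<1}" for t
      using lim[OF that] by (rule tendsto_mult_right)
  qed
  then show ?thesis
    by (simp add: tilted_cdf_integral_def integral_open_interval_real)
qed

lemma isCont_tilted_cdf_integral:
  assumes "continuous_on {-1..1} w"
  shows "isCont (tilted_cdf_integral w) k0"
proof (rule continuous_at_sequentiallyI)
  fix u :: "nat \<Rightarrow> real"
  assume "u \<longlonglongrightarrow> k0"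
  then have "(\<lambda>n. tilted_cdf (u n) t) \<longlonglongrightarrow> tilted_cdf k0 t" for t
    by (intro isCont_tendsto_compose[OF isCont_tilted_cdf_tilt])
  then show "(\<lambda>n. tilted_cdf_integral w (u n)) \<longlonglongrightarrow> tilted_cdf_integral w k0"
    using tilted_cdf_integral_tendsto[OF assms] by (simp add: tilted_cdf_integral_def)
qed

lemma strict_mono_tilted_cdf_integral:
  assumes "continuous_on {-1..1} w" and "\<And>t. t \<in> {-1<..<1} \<Longrightarrow> 0 < w t"
  shows "strict_mono (tilted_cdf_integral w)"
proof (rule strict_monoI)
  fix k1 k2 :: real
  assume "k1 < k2"
  have "integral (cbox (-1) 1) (\<lambda>t. tilted_cdf k1 t * w t)
      < integral (cbox (-1) 1) (\<lambda>t. tilted_cdf k2 t * w t)"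
  proof (rule integral_less)
    show "continuous_on (cbox (-1) 1) (\<lambda>t. tilted_cdf k1 t * w t)"
      "continuous_on (cbox (-1) 1) (\<lambda>t. tilted_cdf k2 t * w t)"
      using assms(1) by (auto intro!: continuous_intros continuous_on_tilted_cdf)
    show "tilted_cdf k1 t * w t < tilted_cdf k2 t * w t" if "t \<in> box (-1) 1" for t
      using that assms(2) strict_mono_tilted_cdf_tilt[of t] \<open>k1 < k2\<close>
      by (auto simp: strict_mono_def)
  qed auto
  then show "tilted_cdf_integral w k1 < tilted_cdf_integral w k2"
    by (simp add: tilted_cdf_integral_def)
qed

lemma ex1_tilted_cdf_integral_eq:
  assumes w: "continuous_on {-1..1} w" "\<And>t. t \<in> {-1<..<1} \<Longrightarrow> 0 < w t"
    and c: "0 < c" "c < integral {-1..1} w"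
  shows "\<exists>!k. tilted_cdf_integral w k = c"
proof -
  have "(\<lambda>n. tilted_cdf_integral w (real n)) \<longlonglongrightarrow> integral {-1..1} (\<lambda>t. 1 * w t)"
    using w(1) by (rule tilted_cdf_integral_tendsto)
      (auto intro: filterlim_compose[OF tilted_cdf_tendsto_at_top filterlim_real_sequentially])
  then have "\<forall>\<^sub>F n in sequentially. c < tilted_cdf_integral w (real n)"
    using c(2) by (simp add: order_tendstoD(1))
  then obtain N where N: "c < tilted_cdf_integral w (real N)"
    by (auto simp: eventually_sequentially)
  have "filterlim (\<lambda>n. - real n) at_bot sequentially"
    by (simp add: filterlim_uminus_at_bot filterlim_real_sequentially)
  then have "(\<lambda>n. tilted_cdf_integral w (- real n)) \<longlonglongrightarrow> integral {-1..1} (\<lambda>t. 0 * w t)"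
    using w(1) by (rule_tac tilted_cdf_integral_tendsto)
      (auto intro: filterlim_compose[OF tilted_cdf_tendsto_at_bot])
  then have "\<forall>\<^sub>F n in sequentially. tilted_cdf_integral w (- real n) < c"
    using c(1) by (simp add: order_tendstoD(2))
  then obtain M where M: "tilted_cdf_integral w (- real M) < c"
    by (auto simp: eventually_sequentially)
  obtain k where "tilted_cdf_integral w k = c"
    using IVT[of "tilted_cdf_integral w" "- real M" c "real N"] M N
      isCont_tilted_cdf_integral[OF w(1)] by force
  moreover have "inj (tilted_cdf_integral w)"
    using strict_mono_tilted_cdf_integral[OF w] by (rule strict_mono_imp_inj_on)
  ultimately show ?thesis
    by (auto dest: injD)
qed

lemma continuous_on_pfun: "continuous_on A (pfun r d)"
  unfolding pfun_def[abs_def] by (intro continuous_intros)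

lemma pfun_pos:
  assumes "\<bar>r\<bar> \<le> 1" "t \<in> {-1<..<1}"
  shows "0 < pfun r d t"
proof -
  have "\<bar>r\<bar> * \<bar>t\<bar> \<le> \<bar>t\<bar>"
    using assms(1) by (intro mult_left_le_one_le) auto
  then have "\<bar>r * t\<bar> < 1"
    using assms(2) by (auto simp: abs_mult)
  then show ?thesis
    by (simp add: pfun_def)
qed

theorem lemmaA1:
  fixes m1 m2 d :: nat and r :: real
  assumes "m1 > 0" and "m2 > 0" and "0 < \<bar>r\<bar>" and "\<bar>r\<bar> < 1" and "d > 0"
  shows "\<exists>!k::real. integral {-1..1} (\<lambda>t. gfun m1 m2 t k * pfun r d t) = 0"
proof -
  define a b where "a = 1 / real m1" and "b = 1 / real m2"
  define P where "P = integral {-1..1} (pfun r d)"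
  have ab: "0 < a" "0 < b"
    using assms(1,2) by (simp_all add: a_def b_def)
  have p: "continuous_on {-1..1} (pfun r d)" "\<And>t. t \<in> {-1<..<1} \<Longrightarrow> 0 < pfun r d t"
    using assms(4) by (simp_all add: continuous_on_pfun pfun_pos)
  have "integral (cbox (-1) 1) (\<lambda>t::real. 0) < integral (cbox (-1) (1::real)) (pfun r d)"
    using p by (intro integral_less) auto
  then have "0 < P"
    by (simp add: P_def)
  have integral_g: "integral {-1..1} (\<lambda>t. gfun m1 m2 t k * pfun r d t)
      = 2 * b * P - 2 * (a + b) * tilted_cdf_integral (pfun r d) k" for k
  proof -
    have "(\<lambda>t. gfun m1 m2 t k * pfun r d t)
        = (\<lambda>t. 2 * b * pfun r d t - 2 * (a + b) * (tilted_cdf k t * pfun r d t))"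
      by (simp add: gfun_eq_tilted_cdf a_def b_def algebra_simps)
    then show ?thesis
      unfolding P_def tilted_cdf_integral_def using p(1)
      by (simp add: integral_diff integrable_continuous_interval continuous_intros
          continuous_on_tilted_cdf)
  qed
  have "\<exists>!k. tilted_cdf_integral (pfun r d) k = b * P / (a + b)"
    using p \<open>0 < P\<close> ab by (intro ex1_tilted_cdf_integral_eq) (simp_all add: field_simps P_def)
  moreover have "integral {-1..1} (\<lambda>t. gfun m1 m2 t k * pfun r d t) = 0
      \<longleftrightarrow> tilted_cdf_integral (pfun r d) k = b * P / (a + b)" for k
    unfolding integral_g using ab by (auto simp: field_simps)
  ultimately show ?thesis
    by simp
qed

end
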